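(* For every ring $R$ and every nonnegative integer $n$, the set $\mathcal{D}^n(R)$ is closed in $R^R$.
   Context: Rings are commutative with unit. A derivation on $R$ is a map $d\colon R\to R$ with $d(x+y)=d(x)+d(y)$ and $d(xy)=d(x)y+d(y)x$. Inductively: $\mathcal{D}^0(R)=\{0\}$; for $n>0$, $D\in\mathcal{D}^n(R)$ if $D$ is additive and $D(xy)-D(x)y-D(y)x=B(x,y)$ for all $x,y\in R$, where $B$ in each variable separately is in $\mathcal{D}^{n-1}(R)$. $R^R$ is the set of all maps $R\to R$ with the product topology, where $R$ has the discrete topology. *)

theory Defs
  imports "HOL-Analysis.Analysis"
begin

definition additive_map :: "('a::comm_ring_1 \<Rightarrow> 'a) \<Rightarrow> bool" where
  "additive_map d \<longleftrightarrow> (\<forall>x y. d (x + y) = d x + d y)"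

fun higher_derivs :: "nat \<Rightarrow> ('a::comm_ring_1 \<Rightarrow> 'a) set" where
  "higher_derivs 0 = {\<lambda>_. 0}"
| "higher_derivs (Suc n) =
     {D. additive_map D \<and>
         (\<forall>x. (\<lambda>y. D (x * y) - D x * y - D y * x) \<in> higher_derivs n) \<and>
         (\<forall>y. (\<lambda>x. D (x * y) - D x * y - D y * x) \<in> higher_derivs n)}"

definition maps_topology :: "('a \<Rightarrow> 'a) topology" where
  "maps_topology = product_topology (\<lambda>_. discrete_topology UNIV) UNIV"

end

theory Submission
  imports Defs
begin

text \<open>In the product of discrete spaces, a condition depending on only finitely many values of
  a map defines a clopen set. Additivity is an intersection of such conditions, and the two
  defect conditions of D^(n+1) are intersections of preimages of D^n under maps each of whose
  coordinates depends on finitely many values, hence continuous; induction on n finishes.\<close>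

abbreviation pointwise_discrete :: "('a \<Rightarrow> 'b) topology" where
  "pointwise_discrete \<equiv> product_topology (\<lambda>_. discrete_topology UNIV) UNIV"

lemma openin_pointwise_discrete_agree:
  assumes "finite F"
  shows "openin pointwise_discrete {g. \<forall>a\<in>F. g a = f a}"
proof -
  define S where "S = (\<lambda>a. if a \<in> F then {f a} else UNIV)"
  have "{g. \<forall>a\<in>F. g a = f a} = PiE UNIV S"
    by (auto simp: S_def PiE_def Pi_def)
  moreover have "{i. S i \<noteq> UNIV} \<subseteq> F"
    by (auto simp: S_def)
  ultimately show ?thesis
    using assms by (simp add: openin_PiE_gen finite_subset)
qed

lemma openin_pointwise_discrete_finitely_determined:
  assumes "finite F" and "\<And>f g. \<forall>a\<in>F. f a = g a \<Longrightarrow> P f = P g"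
  shows "openin pointwise_discrete {f. P f}"
proof (subst openin_subopen, intro ballI)
  fix f assume "f \<in> {f. P f}"
  then have "{g. \<forall>a\<in>F. g a = f a} \<subseteq> {f. P f}"
    using assms(2) by auto
  then show "\<exists>T. openin pointwise_discrete T \<and> f \<in> T \<and> T \<subseteq> {f. P f}"
    using openin_pointwise_discrete_agree[OF assms(1), of f] by blast
qed

lemma closedin_pointwise_discrete_finitely_determined:
  assumes "finite F" and "\<And>f g. \<forall>a\<in>F. f a = g a \<Longrightarrow> P f = P g"
  shows "closedin pointwise_discrete {f. P f}"
proof -
  have "openin pointwise_discrete {f. \<not> P f}"
    using openin_pointwise_discrete_finitely_determined[OF assms(1), of "\<lambda>f. \<not> P f"] assms(2)
    by blast
  then show ?thesis
    by (simp add: closedin_def Compl_eq_Diff_UNIV[symmetric] Collect_neg_eq)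
qed

lemma continuous_map_pointwise_discrete_finitely_determined:
  assumes "\<And>k. \<exists>F. finite F \<and> (\<forall>f g. (\<forall>a\<in>F. f a = g a) \<longrightarrow> T f k = T g k)"
  shows "continuous_map pointwise_discrete pointwise_discrete T"
  unfolding continuous_map_componentwise_UNIV
proof
  fix k
  obtain F where "finite F" and F: "\<forall>f g. (\<forall>a\<in>F. f a = g a) \<longrightarrow> T f k = T g k"
    using assms by blast
  have "openin pointwise_discrete {f. T f k \<in> U}" for U
    using F by (intro openin_pointwise_discrete_finitely_determined[OF \<open>finite F\<close>]) metis
  then show "continuous_map pointwise_discrete (discrete_topology UNIV) (\<lambda>f. T f k)"
    by (simp add: continuous_map_def)
qed

lemma closedin_pointwise_discrete_preimage:
  assumes "closedin pointwise_discrete S"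
    and "\<And>k. \<exists>F. finite F \<and> (\<forall>f g. (\<forall>a\<in>F. f a = g a) \<longrightarrow> T f k = T g k)"
  shows "closedin pointwise_discrete {f. T f \<in> S}"
  using closedin_continuous_map_preimage
    [OF continuous_map_pointwise_discrete_finitely_determined[OF assms(2)] assms(1)]
  by simp

lemma closedin_pointwise_discrete_all:
  assumes "\<And>i. closedin pointwise_discrete {f. P i f}"
  shows "closedin pointwise_discrete {f. \<forall>i. P i f}"
proof -
  have "{f. \<forall>i. P i f} = (\<Inter>i. {f. P i f})"
    by auto
  then show ?thesis
    using assms by (auto intro: closedin_Inter)
qed

lemma derivation_defect_finitely_determined:
  fixes x y :: "'a::comm_ring_1"
  shows "\<exists>F. finite F \<and> (\<forall>D D'. (\<forall>a\<in>F. D a = D' a) \<longrightarrow>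
           D (x * y) - D x * y - D y * x = D' (x * y) - D' x * y - D' y * x)"
  by (intro exI[of _ "{x * y, x, y}"]) auto

theorem lemma2p1:
  fixes n :: nat
  shows "closedin (maps_topology :: ('a::comm_ring_1 \<Rightarrow> 'a) topology) (higher_derivs n)"
  unfolding maps_topology_def
proof (induction n)
  case 0
  have "higher_derivs 0 = {D::'a \<Rightarrow> 'a. \<forall>a. D a = 0}"
    by auto
  moreover have "closedin pointwise_discrete {D::'a \<Rightarrow> 'a. D a = 0}" for a
    by (rule closedin_pointwise_discrete_finitely_determined[of "{a}"]) auto
  ultimately show ?case
    by (simp add: closedin_pointwise_discrete_all)
next
  case (Suc n)
  have "closedin pointwise_discrete {D::'a \<Rightarrow> 'a. D (x + y) = D x + D y}" for x y
    by (rule closedin_pointwise_discrete_finitely_determined[of "{x + y, x, y}"]) auto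
  then have "closedin pointwise_discrete {D::'a \<Rightarrow> 'a. \<forall>x y. D (x + y) = D x + D y}"
    by (simp add: closedin_pointwise_discrete_all)
  moreover have "closedin pointwise_discrete
      {D::'a \<Rightarrow> 'a. \<forall>x. (\<lambda>y. D (x * y) - D x * y - D y * x) \<in> higher_derivs n}"
    by (intro closedin_pointwise_discrete_all closedin_pointwise_discrete_preimage[OF Suc.IH]
        derivation_defect_finitely_determined)
  moreover have "closedin pointwise_discrete
      {D::'a \<Rightarrow> 'a. \<forall>y. (\<lambda>x. D (x * y) - D x * y - D y * x) \<in> higher_derivs n}"
    by (intro closedin_pointwise_discrete_all closedin_pointwise_discrete_preimage[OF Suc.IH]
        derivation_defect_finitely_determined)
  ultimately show ?case
    by (simp add: additive_map_def Collect_conj_eq closedin_Int)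
qed

end
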